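(* Let $X$ be a real Hilbert space, let $A$ be a closed linear subspace of $X$, let $C$ be a nonempty closed convex subset of $A$, and let $(x_n)_{n\in\mathbb{N}}$ be a sequence in $X$. Suppose that $(x_n)_{n\in\mathbb{N}}$ is Fejér monotone with respect to $C$, i.e., for all $n\in\mathbb{N}$ and all $c\in C$, $\|x_{n+1}-c\|\le\|x_n-c\|$, and suppose that every weak cluster point of $(P_A x_n)_{n\in\mathbb{N}}$ lies in $C$. Then $(P_A x_n)_{n\in\mathbb{N}}$ converges weakly to some point in $C$.
   Context: $P_A$ denotes the orthogonal (metric) projection onto the closed convex set $A$. *)

theory Defs
  imports "HOL-Analysis.Analysis"
begin

text \<open>Metric (orthogonal) projection onto a set of a real inner product space;
  same definition as the library's closest_point, but without the heine_borel
  (finite-dimensionality) restriction.\<close>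
definition metric_proj :: "'a::real_inner set \<Rightarrow> 'a \<Rightarrow> 'a" where
  "metric_proj S a = (SOME p. p \<in> S \<and> (\<forall>y\<in>S. dist a p \<le> dist a y))"

definition weakly_converges :: "(nat \<Rightarrow> 'a::real_inner) \<Rightarrow> 'a \<Rightarrow> bool" where
  "weakly_converges x l \<longleftrightarrow> (\<forall>y. ((\<lambda>n. x n \<bullet> y) \<longlongrightarrow> l \<bullet> y) sequentially)"

definition weak_cluster_point :: "(nat \<Rightarrow> 'a::real_inner) \<Rightarrow> 'a \<Rightarrow> bool" where
  "weak_cluster_point x l \<longleftrightarrow> (\<exists>r. strict_mono r \<and> weakly_converges (x \<circ> r) l)"

end

theory Submission
  imports Defs "HOL-Library.Diagonal_Subsequence"
begin

text \<open>By Fejer monotonicity the distances \<open>\<parallel>x\<^sub>n - c\<parallel>\<close> converge for every \<open>c \<in> C\<close>;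
  expanding the squares, \<open>\<langle>x\<^sub>n, c\<^sub>1 - c\<^sub>2\<rangle>\<close> converges for all \<open>c\<^sub>1, c\<^sub>2 \<in> C\<close>, and since
  \<open>x\<^sub>n - P\<^sub>A x\<^sub>n \<bottom> A\<close> the same holds for \<open>P\<^sub>A x\<^sub>n\<close>. Two weak cluster points \<open>p, q\<close>
  lie in \<open>C\<close>, so testing against \<open>p - q\<close> gives \<open>\<langle>p, p - q\<rangle> = \<langle>q, p - q\<rangle>\<close>, i.e.\ \<open>p = q\<close>.
  The sequence \<open>P\<^sub>A x\<^sub>n\<close> is bounded, and bounded sequences in a Hilbert space have weakly
  convergent subsequences; a bounded sequence with a unique weak cluster point converges
  weakly to it.\<close>

section \<open>Metric projection onto closed convex sets\<close>

lemma parallelogram_law: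
  fixes x y :: "'a::real_inner"
  shows "norm (x + y)^2 + norm (x - y)^2 = 2 * norm x ^2 + 2 * norm y^2"
  by (simp add: power2_norm_eq_inner algebra_simps inner_add inner_diff inner_commute)

lemma near_minimisers_close:
  fixes S :: "'a::real_inner set"
  assumes "convex S" "s \<in> S" "t \<in> S" and dist_ge: "\<forall>y\<in>S. d \<le> dist a y" and "0 \<le> d"
  shows "norm (s - t)^2 \<le> 2 * dist a s ^2 + 2 * dist a t ^2 - 4 * d^2"
proof -
  have "(1/2) *\<^sub>R (s + t) \<in> S"
    using convexD[OF assms(1-3), of "1/2" "1/2"] by (simp add: scaleR_add_right)
  hence "d^2 \<le> norm (a - (1/2) *\<^sub>R (s + t))^2"
    using dist_ge \<open>0 \<le> d\<close> by (simp add: dist_norm power_mono)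
  moreover have "norm ((a - s) + (a - t))^2 = 4 * norm (a - (1/2) *\<^sub>R (s + t))^2"
  proof -
    have "(a - s) + (a - t) = 2 *\<^sub>R (a - (1/2) *\<^sub>R (s + t))"
      by (simp add: algebra_simps scaleR_2)
    thus ?thesis by (simp add: power_mult_distrib)
  qed
  moreover have "norm ((a - s) + (a - t))^2 + norm (s - t)^2 = 2 * dist a s ^2 + 2 * dist a t ^2"
    using parallelogram_law[of "a - s" "a - t"] by (simp add: dist_norm norm_minus_commute)
  ultimately show ?thesis by linarith
qed

lemma closest_point_exists_complete:
  fixes S :: "'a::{real_inner, complete_space} set"
  assumes "closed S" "convex S" "S \<noteq> {}"
  shows "\<exists>p\<in>S. \<forall>y\<in>S. dist a p \<le> dist a y"
proof -
  define d where "d = infdist a S"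
  have dist_ge: "\<forall>y\<in>S. d \<le> dist a y" unfolding d_def by (simp add: infdist_le)
  have "0 \<le> d" using infdist_nonneg d_def by simp
  have near: "\<exists>s\<in>S. dist a s < d + e" if "e > 0" for e
  proof (rule ccontr)
    assume "\<not> ?thesis"
    hence "d + e \<le> d"
      unfolding d_def infdist_notempty[OF assms(3)]
      by (intro cINF_greatest[OF assms(3)]) force
    thus False using \<open>e > 0\<close> by simp
  qed
  define e where "e n = inverse (real (Suc n))" for n
  have "\<exists>s\<in>S. (dist a s)^2 < d^2 + e n" for n
  proof -
    have "d < sqrt (d^2 + e n)"
      using \<open>0 \<le> d\<close> by (simp add: e_def real_less_rsqrt)
    then obtain s where "s \<in> S" "dist a s < sqrt (d^2 + e n)" using near[of "sqrt (d^2 + e n) - d"] by auto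
    moreover from this have "(dist a s)^2 < (sqrt (d^2 + e n))^2"
      by (intro power_strict_mono) auto
    moreover have "(sqrt (d^2 + e n))^2 = d^2 + e n" by (simp add: e_def add_nonneg_nonneg)
    ultimately show ?thesis by auto
  qed
  then obtain s where sS: "\<And>n. s n \<in> S" and s_near: "\<And>n. (dist a (s n))^2 < d^2 + e n"
    by metis
  have close: "norm (s n - s m)^2 \<le> 2 * e n + 2 * e m" for n m
    using near_minimisers_close[OF assms(2) sS[of n] sS[of m] dist_ge \<open>0 \<le> d\<close>] s_near[of n] s_near[of m]
    by linarith
  have "Cauchy s"
  proof (rule metric_CauchyI)
    fix eps :: real assume "eps > 0"
    obtain N where N: "inverse (real (Suc N)) < eps^2 / 4"
      using reals_Archimedean[of "eps^2 / 4"] \<open>eps > 0\<close> by auto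
    have "dist (s m) (s n) < eps" if "N \<le> m" "N \<le> n" for m n
    proof -
      have "e m \<le> inverse (real (Suc N))" "e n \<le> inverse (real (Suc N))"
        using that by (auto simp: e_def intro!: le_imp_inverse_le)
      hence "norm (s m - s n)^2 \<le> 4 * inverse (real (Suc N))" using close[of m n] by linarith
      also have "\<dots> < eps^2" using N by simp
      finally have "norm (s m - s n)^2 < eps^2" .
      thus ?thesis using \<open>eps > 0\<close> by (simp add: dist_norm power_less_imp_less_base)
    qed
    thus "\<exists>M. \<forall>m\<ge>M. \<forall>n\<ge>M. dist (s m) (s n) < eps" by blast
  qed
  then obtain p where sp: "s \<longlonglongrightarrow> p" using Cauchy_convergent_iff convergent_def by blast
  have "p \<in> S" using closed_sequentially[OF assms(1) sS sp] .
  have "(\<lambda>n. (dist a (s n))^2) \<longlonglongrightarrow> (dist a p)^2" by (intro tendsto_intros sp)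
  moreover have "(\<lambda>n. d^2 + e n) \<longlonglongrightarrow> d^2 + 0" unfolding e_def
    by (intro tendsto_intros LIMSEQ_inverse_real_of_nat)
  ultimately have "(dist a p)^2 \<le> d^2"
    using s_near by (intro LIMSEQ_le[of _ _ "\<lambda>n. d^2 + e n"]) (auto simp: less_imp_le)
  hence "dist a p \<le> d" using \<open>0 \<le> d\<close> by (rule power2_le_imp_le)
  thus ?thesis using \<open>p \<in> S\<close> dist_ge by force
qed

lemma quadratic_lower_bound_imp_zero:
  fixes k N :: real
  assumes "0 \<le> N" and "\<And>t. 2 * t * k \<le> t^2 * N"
  shows "k = 0"
proof -
  define t where "t = k / (N + 1)"
  have tk: "t * (N + 1) = k" using \<open>0 \<le> N\<close> by (simp add: t_def)
  have "2 * t * k * (N + 1)^2 \<le> t^2 * N * (N + 1)^2"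
    using assms(2)[of t] by (rule mult_right_mono) simp
  hence "2 * (t * (N + 1)) * k * (N + 1) \<le> (t * (N + 1))^2 * N"
    by (simp add: power2_eq_square algebra_simps)
  hence "k^2 * (N + 2) \<le> 0" unfolding tk by (simp add: power2_eq_square algebra_simps)
  moreover have "0 < N + 2" using \<open>0 \<le> N\<close> by simp
  ultimately have "k^2 \<le> 0" by (simp add: mult_le_0_iff)
  thus ?thesis by simp
qed

lemma closest_point_subspace_orthogonal:
  fixes S :: "'a::real_inner set"
  assumes "subspace S" "p \<in> S" "\<forall>y\<in>S. dist a p \<le> dist a y" "s \<in> S"
  shows "(a - p) \<bullet> s = 0"
proof (rule quadratic_lower_bound_imp_zero)
  show "0 \<le> s \<bullet> s" by simp
  fix t :: real
  have "p + t *\<^sub>R s \<in> S" using assms(1,2,4) by (simp add: subspace_add subspace_scale)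
  hence "norm (a - p)^2 \<le> norm ((a - p) - t *\<^sub>R s)^2"
    using assms(3) by (simp add: dist_norm power_mono diff_diff_eq)
  moreover have "norm ((a - p) - t *\<^sub>R s)^2 = norm (a - p)^2 - 2 * t * ((a - p) \<bullet> s) + t^2 * (s \<bullet> s)"
    unfolding power2_norm_eq_inner
    by (simp add: inner_diff_left inner_diff_right inner_commute power2_eq_square)
  ultimately show "2 * t * ((a - p) \<bullet> s) \<le> t^2 * (s \<bullet> s)" by simp
qed

lemma
  fixes S :: "'a::{real_inner, complete_space} set"
  assumes "subspace S" "closed S"
  shows metric_proj_in_subspace: "metric_proj S a \<in> S"
    and metric_proj_orthogonal: "s \<in> S \<Longrightarrow> (a - metric_proj S a) \<bullet> s = 0"
proof -
  have "\<exists>p. p \<in> S \<and> (\<forall>y\<in>S. dist a p \<le> dist a y)"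
    using closest_point_exists_complete[OF assms(2) subspace_imp_convex[OF assms(1)]] assms(1)
    by (metis empty_iff subspace_0)
  hence "metric_proj S a \<in> S \<and> (\<forall>y\<in>S. dist a (metric_proj S a) \<le> dist a y)"
    unfolding metric_proj_def by (rule someI_ex)
  thus "metric_proj S a \<in> S" "s \<in> S \<Longrightarrow> (a - metric_proj S a) \<bullet> s = 0"
    using closest_point_subspace_orthogonal[OF assms(1)] by auto
qed

lemma metric_proj_inner_eq:
  fixes A :: "'a::{real_inner, complete_space} set"
  assumes "subspace A" "closed A" "d \<in> A"
  shows "metric_proj A x \<bullet> d = x \<bullet> d"
  using metric_proj_orthogonal[OF assms] by (simp add: inner_diff_left)

lemma norm_metric_proj_diff_le:
  fixes A :: "'a::{real_inner, complete_space} set"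
  assumes "subspace A" "closed A" "c \<in> A"
  shows "norm (metric_proj A x - c) \<le> norm (x - c)"
proof -
  have "metric_proj A x - c \<in> A"
    using assms metric_proj_in_subspace subspace_diff by blast
  hence "(x - metric_proj A x) \<bullet> (metric_proj A x - c) = 0"
    using metric_proj_orthogonal[OF assms(1,2)] by blast
  hence "norm (x - c)^2 = norm (x - metric_proj A x)^2 + norm (metric_proj A x - c)^2"
    using norm_add_Pythagorean[of "x - metric_proj A x" "metric_proj A x - c"]
    by (simp add: orthogonal_def)
  hence "norm (metric_proj A x - c)^2 \<le> norm (x - c)^2" by simp
  thus ?thesis by (rule power2_le_imp_le) simp
qed

section \<open>Weak sequential compactness\<close>

lemma subspace_closure:
  fixes S :: "'a::real_normed_vector set"
  assumes "subspace S"
  shows "subspace (closure S)"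
  unfolding subspace_def
proof (intro conjI ballI allI)
  show "0 \<in> closure S" using assms closure_subset subspace_0 by blast
next
  fix x y assume "x \<in> closure S" "y \<in> closure S"
  hence "x + y \<in> closure (S + S)" using closure_sum set_plus_intro by blast
  moreover have "S + S \<subseteq> S" using assms by (auto simp: set_plus_def subspace_add)
  ultimately show "x + y \<in> closure S" using closure_mono by blast
next
  fix c :: real and x assume "x \<in> closure S"
  hence "c *\<^sub>R x \<in> closure ((*\<^sub>R) c ` S)" using closure_scaleR by blast
  moreover have "(*\<^sub>R) c ` S \<subseteq> S" using assms by (auto simp: subspace_scale)
  ultimately show "c *\<^sub>R x \<in> closure S" using closure_mono by blast
qed

lemma riesz_representation:
  fixes f :: "'a::{real_inner, complete_space} \<Rightarrow> real"
  assumes "bounded_linear f"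
  shows "\<exists>p. \<forall>y. f y = y \<bullet> p"
proof (cases "\<forall>y. f y = 0")
  case True thus ?thesis by (intro exI[of _ 0]) simp
next
  case False
  then obtain z where "f z \<noteq> 0" by blast
  interpret f: bounded_linear f by fact
  define N where "N = {y. f y = 0}"
  have "closed N"
    unfolding N_def using continuous_closed_preimage_constant[of UNIV f 0]
    by (simp add: linear_continuous_on assms)
  moreover have "subspace N" unfolding N_def by (rule linear_subspace_kernel) (rule f.linear)
  define w where "w = z - metric_proj N z"
  have w_orth: "s \<bullet> w = 0" if "s \<in> N" for s
    using metric_proj_orthogonal[OF \<open>subspace N\<close> \<open>closed N\<close> that] by (simp add: w_def inner_commute)
  have "f (metric_proj N z) = 0"
    using metric_proj_in_subspace[OF \<open>subspace N\<close> \<open>closed N\<close>] N_def by simp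
  hence fw: "f w = f z" by (simp add: w_def f.diff)
  hence "w \<noteq> 0" using \<open>f z \<noteq> 0\<close> f.zero by auto
  show ?thesis
  proof (intro exI[of _ "(f w / (w \<bullet> w)) *\<^sub>R w"] allI)
    fix y
    have "y - (f y / f w) *\<^sub>R w \<in> N"
      using fw \<open>f z \<noteq> 0\<close> by (simp add: N_def f.diff f.scaleR)
    hence "(y - (f y / f w) *\<^sub>R w) \<bullet> w = 0" by (rule w_orth)
    hence "y \<bullet> w = (f y / f w) * (w \<bullet> w)" by (simp add: inner_diff_left)
    thus "f y = y \<bullet> ((f w / (w \<bullet> w)) *\<^sub>R w)"
      using \<open>w \<noteq> 0\<close> fw \<open>f z \<noteq> 0\<close> by (simp add: field_simps)
  qed
qed

lemma inner_convergent_span: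
  assumes "\<forall>y\<in>T. convergent (\<lambda>i. v i \<bullet> y)" "y \<in> span T"
  shows "convergent (\<lambda>i. v i \<bullet> y)"
  using assms(2)
proof (induction rule: span_induct_alt)
  case base thus ?case by (simp add: convergent_const)
next
  case (step c x y)
  have "convergent (\<lambda>i. c * (v i \<bullet> x) + v i \<bullet> y)"
    using assms(1) step by (intro convergent_add convergent_mult convergent_const) auto
  thus ?case by (simp add: inner_add_right)
qed

lemma inner_convergent_closure:
  fixes v :: "nat \<Rightarrow> 'a::real_inner"
  assumes bounded: "\<forall>i. norm (v i) \<le> B"
    and conv: "\<forall>y\<in>T. convergent (\<lambda>i. v i \<bullet> y)" and "y \<in> closure T"
  shows "convergent (\<lambda>i. v i \<bullet> y)"
  unfolding Cauchy_convergent_iff[symmetric]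
proof (rule metric_CauchyI)
  fix e :: real assume "e > 0"
  have "0 \<le> B" using bounded norm_ge_zero order_trans by blast
  then obtain z where "z \<in> T" and z: "dist y z < e / (4 * (B + 1))"
    using closure_approachableD[OF \<open>y \<in> closure T\<close>, of "e / (4 * (B + 1))"] \<open>e > 0\<close> by auto
  have "Cauchy (\<lambda>i. v i \<bullet> z)" using conv \<open>z \<in> T\<close> Cauchy_convergent_iff by blast
  then obtain M where M: "\<And>m n. M \<le> m \<Longrightarrow> M \<le> n \<Longrightarrow> dist (v m \<bullet> z) (v n \<bullet> z) < e/2"
    using metric_CauchyD[of _ "e/2"] \<open>e > 0\<close> by (meson half_gt_zero)
  have small: "\<bar>v i \<bullet> (y - z)\<bar> < e/4" for i
  proof -
    have "\<bar>v i \<bullet> (y - z)\<bar> \<le> norm (v i) * norm (y - z)" by (rule Cauchy_Schwarz_ineq2)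
    also have "\<dots> \<le> B * (e / (4 * (B + 1)))"
      using bounded z \<open>0 \<le> B\<close> by (intro mult_mono) (auto simp: dist_norm)
    also have "\<dots> < e/4" using \<open>0 \<le> B\<close> \<open>e > 0\<close> by (simp add: field_simps)
    finally show ?thesis .
  qed
  have "dist (v m \<bullet> y) (v n \<bullet> y) < e" if "M \<le> m" "M \<le> n" for m n
  proof -
    have "v m \<bullet> y - v n \<bullet> y = (v m \<bullet> z - v n \<bullet> z) + v m \<bullet> (y - z) - v n \<bullet> (y - z)"
      by (simp add: inner_diff_right)
    thus ?thesis using M[OF that] small[of m] small[of n] unfolding dist_real_def by linarith
  qed
  thus "\<exists>M. \<forall>m\<ge>M. \<forall>n\<ge>M. dist (v m \<bullet> y) (v n \<bullet> y) < e" by blast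
qed

lemma inner_convergent_metric_proj:
  fixes M :: "'a::{real_inner, complete_space} set"
  assumes "subspace M" "closed M" "\<forall>i. v i \<in> M"
    and "\<forall>y\<in>M. convergent (\<lambda>i. v i \<bullet> y)"
  shows "convergent (\<lambda>i. v i \<bullet> y)"
proof -
  have "v i \<bullet> y = v i \<bullet> metric_proj M y" for i
  proof -
    have "(y - metric_proj M y) \<bullet> v i = 0" using metric_proj_orthogonal[OF assms(1,2)] assms(3) by blast
    hence "y \<bullet> v i = metric_proj M y \<bullet> v i" by (simp add: inner_diff_left)
    thus ?thesis by (simp only: inner_commute)
  qed
  moreover have "metric_proj M y \<in> M" by (rule metric_proj_in_subspace[OF assms(1,2)])
  ultimately show ?thesis using assms(4) by simp
qed

lemma weakly_convergent_if_inner_convergent: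
  fixes v :: "nat \<Rightarrow> 'a::{real_inner, complete_space}"
  assumes bounded: "\<forall>i. norm (v i) \<le> B" and conv: "\<forall>y. convergent (\<lambda>i. v i \<bullet> y)"
  shows "\<exists>p. weakly_converges v p"
proof -
  define f where "f y = lim (\<lambda>i. v i \<bullet> y)" for y
  have f: "(\<lambda>i. v i \<bullet> y) \<longlonglongrightarrow> f y" for y
    using conv convergent_LIMSEQ_iff f_def by metis
  have "bounded_linear f"
  proof (rule bounded_linear_intro)
    show "f (x + y) = f x + f y" for x y
      using tendsto_add[OF f f, of x y] f[of "x + y"] LIMSEQ_unique by (simp add: inner_add_right)
    show "f (c *\<^sub>R x) = c *\<^sub>R f x" for c x
      using tendsto_mult_left[OF f, of c x] f[of "c *\<^sub>R x"] LIMSEQ_unique by simp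
    show "norm (f y) \<le> norm y * B" for y
    proof (rule Lim_bounded[of "\<lambda>i. \<bar>v i \<bullet> y\<bar>" _ 0])
      show "(\<lambda>i. \<bar>v i \<bullet> y\<bar>) \<longlonglongrightarrow> norm (f y)" by (simp add: tendsto_rabs f)
      show "\<forall>i\<ge>0. \<bar>v i \<bullet> y\<bar> \<le> norm y * B"
        using bounded Cauchy_Schwarz_ineq2 order_trans
        by (metis mult.commute mult_right_mono norm_ge_zero)
    qed
  qed
  then obtain p where "\<forall>y. f y = y \<bullet> p" using riesz_representation by blast
  hence "weakly_converges v p" unfolding weakly_converges_def using f by (simp add: inner_commute)
  thus ?thesis ..
qed

lemma bounded_subseq_inner_convergent:
  fixes u :: "nat \<Rightarrow> 'a::real_inner"
  assumes bounded: "\<forall>n. norm (u n) \<le> B"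
  shows "\<exists>r. strict_mono r \<and> (\<forall>k. convergent (\<lambda>i. u (r i) \<bullet> u k))"
proof -
  interpret subseqs "\<lambda>k s. convergent (\<lambda>i. u (s i) \<bullet> u k)"
  proof
    fix k and s :: "nat \<Rightarrow> nat"
    obtain f where f: "strict_mono f" "monoseq (\<lambda>n. u (s (f n)) \<bullet> u k)"
      using seq_monosub[of "\<lambda>n. u (s n) \<bullet> u k"] by blast
    have "Bseq (\<lambda>n. u (s (f n)) \<bullet> u k)"
    proof (rule BseqI')
      fix n
      have "\<bar>u (s (f n)) \<bullet> u k\<bar> \<le> norm (u (s (f n))) * norm (u k)" by (rule Cauchy_Schwarz_ineq2)
      also have "\<dots> \<le> B * B" using bounded by (intro mult_mono) (auto intro: order_trans[OF norm_ge_zero])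
      finally show "norm (u (s (f n)) \<bullet> u k) \<le> B * B" by simp
    qed
    hence "convergent (\<lambda>n. u (s (f n)) \<bullet> u k)" using f(2) Bseq_monoseq_convergent by blast
    thus "\<exists>r'. strict_mono r' \<and> convergent (\<lambda>i. u ((s \<circ> r') i) \<bullet> u k)"
      using f(1) by auto
  qed
  have "convergent (\<lambda>i. u (diagseq i) \<bullet> u k)" for k
  proof -
    have "convergent (\<lambda>i. u ((diagseq \<circ> (+) (Suc k)) i) \<bullet> u k)"
      by (rule diagseq_holds) (auto dest: convergent_subseq_convergent simp: o_def)
    hence "convergent (\<lambda>i. u (diagseq (i + Suc k)) \<bullet> u k)" by (simp add: o_def add.commute)
    thus ?thesis using convergent_ignore_initial_segment[of "\<lambda>i. u (diagseq i) \<bullet> u k" "Suc k"] by simp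
  qed
  thus ?thesis using subseq_diagseq by blast
qed

lemma weakly_convergent_subseq:
  fixes u :: "nat \<Rightarrow> 'a::{real_inner, complete_space}"
  assumes bounded: "\<forall>n. norm (u n) \<le> B"
  shows "\<exists>r p. strict_mono r \<and> weakly_converges (u \<circ> r) p"
proof -
  obtain r where "strict_mono r" and r: "\<forall>k. convergent (\<lambda>i. u (r i) \<bullet> u k)"
    using bounded_subseq_inner_convergent[OF bounded] by blast
  define M where "M = closure (span (range u))"
  have "subspace M" unfolding M_def by (intro subspace_closure subspace_span)
  have "closed M" unfolding M_def by simp
  have "\<forall>i. (u \<circ> r) i \<in> M"
  proof
    fix i
    have "u (r i) \<in> span (range u)" by (simp add: span_base)
    thus "(u \<circ> r) i \<in> M" unfolding M_def using closure_subset by auto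
  qed
  have bounded_r: "\<forall>i. norm ((u \<circ> r) i) \<le> B" using bounded by simp
  have "\<forall>y\<in>range u. convergent (\<lambda>i. (u \<circ> r) i \<bullet> y)" using r by auto
  hence "\<forall>y\<in>span (range u). convergent (\<lambda>i. (u \<circ> r) i \<bullet> y)"
    using inner_convergent_span by blast
  hence "\<forall>y\<in>M. convergent (\<lambda>i. (u \<circ> r) i \<bullet> y)"
    unfolding M_def using inner_convergent_closure[OF bounded_r] by blast
  hence "\<forall>y. convergent (\<lambda>i. (u \<circ> r) i \<bullet> y)"
    using inner_convergent_metric_proj[OF \<open>subspace M\<close> \<open>closed M\<close> \<open>\<forall>i. (u \<circ> r) i \<in> M\<close>] by blast
  then obtain p where "weakly_converges (u \<circ> r) p"
    using weakly_convergent_if_inner_convergent[OF bounded_r] by blast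
  thus ?thesis using \<open>strict_mono r\<close> by blast
qed

lemma weak_cluster_points_eq:
  assumes "convergent (\<lambda>n. u n \<bullet> (p - q))"
    and "weak_cluster_point u p" "weak_cluster_point u q"
  shows "p = q"
proof -
  obtain L where L: "(\<lambda>n. u n \<bullet> (p - q)) \<longlonglongrightarrow> L" using assms(1) convergent_def by blast
  have "c \<bullet> (p - q) = L" if cluster: "weak_cluster_point u c" for c
  proof -
    obtain r where "strict_mono r" "weakly_converges (u \<circ> r) c"
      using cluster unfolding weak_cluster_point_def by blast
    hence "(\<lambda>n. u (r n) \<bullet> (p - q)) \<longlonglongrightarrow> c \<bullet> (p - q)"
      unfolding weakly_converges_def by simp
    moreover have "(\<lambda>n. u (r n) \<bullet> (p - q)) \<longlonglongrightarrow> L"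
      using LIMSEQ_subseq_LIMSEQ[OF L \<open>strict_mono r\<close>] by (simp add: o_def)
    ultimately show ?thesis by (rule LIMSEQ_unique)
  qed
  hence "(p - q) \<bullet> (p - q) = 0" using assms(2,3) by (simp add: inner_diff_left)
  thus ?thesis by simp
qed

lemma weakly_converges_if_weak_cluster_points_eq:
  fixes u :: "nat \<Rightarrow> 'a::{real_inner, complete_space}"
  assumes bounded: "\<forall>n. norm (u n) \<le> B"
    and unique: "\<And>q. weak_cluster_point u q \<Longrightarrow> q = p"
  shows "weakly_converges u p"
  unfolding weakly_converges_def
proof (rule allI, rule ccontr)
  fix y assume "\<not> (\<lambda>n. u n \<bullet> y) \<longlonglongrightarrow> p \<bullet> y"
  then obtain e where "e > 0" and not_near: "\<not> eventually (\<lambda>n. dist (u n \<bullet> y) (p \<bullet> y) < e) sequentially"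
    unfolding tendsto_iff by auto
  obtain s :: "nat \<Rightarrow> nat" where "strict_mono s" and far: "\<And>n. \<not> dist (u (s n) \<bullet> y) (p \<bullet> y) < e"
    using not_eventually_sequentiallyD[OF not_near] by blast
  obtain t q where "strict_mono t" and t: "weakly_converges (u \<circ> s \<circ> t) q"
    using weakly_convergent_subseq[of "u \<circ> s" B] bounded by auto
  have "weak_cluster_point u q"
    unfolding weak_cluster_point_def
    using strict_mono_o[OF \<open>strict_mono s\<close> \<open>strict_mono t\<close>] t by (auto simp: o_assoc)
  hence "(\<lambda>n. u (s (t n)) \<bullet> y) \<longlonglongrightarrow> p \<bullet> y"
    using unique t unfolding weakly_converges_def by auto
  then obtain N where "dist (u (s (t N)) \<bullet> y) (p \<bullet> y) < e"
    using \<open>e > 0\<close> unfolding tendsto_iff eventually_sequentially by blast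
  thus False using far by blast
qed

section \<open>Fejer monotone sequences\<close>

lemma inner_diff_eq_norm_diff:
  fixes x c1 c2 :: "'a::real_inner"
  shows "x \<bullet> (c1 - c2) = (norm (x - c2)^2 - norm (x - c1)^2 - norm c2^2 + norm c1^2) / 2"
  by (simp add: power2_norm_eq_inner inner_diff_left inner_diff_right inner_commute)

lemma fejer_monotone_norm_diff_le:
  assumes "\<And>n c. c \<in> C \<Longrightarrow> norm (x (Suc n) - c) \<le> norm (x n - c)" and "c \<in> C"
  shows "norm (x n - c) \<le> norm (x 0 - c)"
  using assms(1)[OF \<open>c \<in> C\<close>] by (induction n) (auto intro: order_trans)

lemma fejer_monotone_inner_diff_convergent:
  fixes x :: "nat \<Rightarrow> 'a::real_inner"
  assumes fejer: "\<And>n c. c \<in> C \<Longrightarrow> norm (x (Suc n) - c) \<le> norm (x n - c)"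
    and "c1 \<in> C" "c2 \<in> C"
  shows "convergent (\<lambda>n. x n \<bullet> (c1 - c2))"
proof -
  have dist_convergent: "convergent (\<lambda>n. norm (x n - c))" if "c \<in> C" for c
  proof -
    have "decseq (\<lambda>n. norm (x n - c))" using fejer[OF that] by (simp add: decseq_Suc_iff)
    thus ?thesis using decseq_convergent[of _ 0] convergent_def by (metis norm_ge_zero)
  qed
  obtain L1 L2 where "(\<lambda>n. norm (x n - c1)) \<longlonglongrightarrow> L1" "(\<lambda>n. norm (x n - c2)) \<longlonglongrightarrow> L2"
    using dist_convergent[OF \<open>c1 \<in> C\<close>] dist_convergent[OF \<open>c2 \<in> C\<close>] convergent_def by blast
  hence "(\<lambda>n. (norm (x n - c2)^2 - norm (x n - c1)^2 - norm c2^2 + norm c1^2) / 2)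
      \<longlonglongrightarrow> (L2^2 - L1^2 - norm c2^2 + norm c1^2) / 2"
    by (auto intro!: tendsto_intros)
  hence "convergent (\<lambda>n. (norm (x n - c2)^2 - norm (x n - c1)^2 - norm c2^2 + norm c1^2) / 2)"
    by (rule convergentI)
  thus ?thesis by (simp only: inner_diff_eq_norm_diff)
qed

theorem lemma2p1:
  fixes A C :: "'a::{real_inner, complete_space} set" and x :: "nat \<Rightarrow> 'a"
  assumes "subspace A" and "closed A"
    and "C \<noteq> {}" and "closed C" and "convex C" and "C \<subseteq> A"
    and "\<And>n c. c \<in> C \<Longrightarrow> norm (x (Suc n) - c) \<le> norm (x n - c)"
    and "\<And>p. weak_cluster_point (\<lambda>n. metric_proj A (x n)) p \<Longrightarrow> p \<in> C"
  shows "\<exists>p\<in>C. weakly_converges (\<lambda>n. metric_proj A (x n)) p"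
proof -
  define u where "u = (\<lambda>n. metric_proj A (x n))"
  obtain c where "c \<in> C" using assms(3) by blast
  have bounded: "\<forall>n. norm (u n) \<le> norm c + norm (x 0 - c)"
  proof
    fix n
    have "norm (u n - c) \<le> norm (x n - c)"
      unfolding u_def using \<open>c \<in> C\<close> assms(6) by (intro norm_metric_proj_diff_le[OF assms(1,2)]) auto
    thus "norm (u n) \<le> norm c + norm (x 0 - c)"
      using norm_triangle_sub[of "u n" c] fejer_monotone_norm_diff_le[where C = C and x = x, OF assms(7) \<open>c \<in> C\<close>, of n] by linarith
  qed
  have unique: "p = q" if "weak_cluster_point u p" "weak_cluster_point u q" for p q
  proof (rule weak_cluster_points_eq[OF _ that])
    have "p \<in> C" "q \<in> C" using that assms(8) unfolding u_def by auto
    hence "u n \<bullet> (p - q) = x n \<bullet> (p - q)" for n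
      using metric_proj_inner_eq[OF assms(1,2)] assms(1,6) u_def by (simp add: subset_iff subspace_diff)
    thus "convergent (\<lambda>n. u n \<bullet> (p - q))"
      using fejer_monotone_inner_diff_convergent[where C = C and x = x, OF assms(7) \<open>p \<in> C\<close> \<open>q \<in> C\<close>] by simp
  qed
  obtain r p where "strict_mono r" "weakly_converges (u \<circ> r) p"
    using weakly_convergent_subseq[OF bounded] by blast
  hence "weak_cluster_point u p" unfolding weak_cluster_point_def by blast
  hence "p \<in> C" using assms(8) unfolding u_def by blast
  moreover have "weakly_converges u p"
    using weakly_converges_if_weak_cluster_points_eq[OF bounded] unique \<open>weak_cluster_point u p\<close> by blast
  ultimately show ?thesis unfolding u_def by blast
qed

end
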